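(* For every black-white pairing $\rho$ of $\mathbf N$, $$\mathrm{sign}_c(\mathbf N)\,\mathrm{sign}_{BW}(\rho)\prod_{\{b,w\}\in\rho}\mathrm{sign}(b,w)=(-1)^{\#\text{crossings of }\rho}.$$
   Context: $\mathbf N=\{1,\dots,2n\}$ is a set of nodes (arranged counterclockwise on a circle), each colored black or white, with $n$ of each color. A pairing is a partition into 2-element blocks; $\{a,c\},\{b,d\}$ cross if $a<b<c<d$. Black-white pairing: each pair has one black and one white node; with black nodes $b_1<\dots<b_n$ and white nodes $w_1<\dots<w_n$, $\mathrm{sign}_{BW}(\rho)$ is the sign of the permutation $\theta$ of $\{1,\dots,n\}$ with $\rho(b_i)=w_{\theta(i)}$. A couple of consecutive nodes of the same color is a pair $(m,m+1)$, $m\in\{1,\dots,2n\}$, indices mod $2n$ (so $(2n,1)$ allowed), with $m,m+1$ of the same color. For black $b$ and white $w$, $a_{b,w}$ is the number of $m$ with $\min(b,w)\le m<m+1\le\max(b,w)$ and $m,m+1$ the same color; $\mathrm{sign}(b,w)=(-1)^{(|b-w|+a_{b,w}-1)/2}$ (the exponent is an integer). Let $(n_1,n_1+1),\dots,(n_{2k},n_{2k}+1)$ be all couples, $n_1<\dots<n_{2k}$; $k$ of them are black couples with first elements $s_1<\dots<s_k$ and $k$ are white couples with first elements $u_1<\dots<u_k$. If node $1$ is black, put $\varphi(u_i)=2i-1$, $\varphi(s_i)=2i$; if node 1 is white, put $\varphi(s_i)=2i-1$, $\varphi(u_i)=2i$. Then $\mathrm{sign}_c(\mathbf N)$ is the sign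 of the permutation $(\varphi(n_1),\dots,\varphi(n_{2k}))$ in one-line notation, and $\mathrm{sign}_c(\mathbf N)=1$ if $k=0$. *)

theory Defs
  imports "HOL-Combinatorics.Permutations"
begin

text \<open>Nodes are 1..2n; colouring col :: nat => bool, True = black, False = white.\<close>

definition nodes :: "nat \<Rightarrow> nat set" where
  "nodes n = {1..2*n}"

definition balanced_colouring :: "nat \<Rightarrow> (nat \<Rightarrow> bool) \<Rightarrow> bool" where
  "balanced_colouring n col \<longleftrightarrow> card {i \<in> nodes n. col i} = n"

definition bw_pairing :: "nat \<Rightarrow> (nat \<Rightarrow> bool) \<Rightarrow> nat set set \<Rightarrow> bool" where
  "bw_pairing n col \<rho> \<longleftrightarrow>
     (\<forall>B\<in>\<rho>. \<exists>b w. B = {b, w} \<and> b \<in> nodes n \<and> w \<in> nodes n \<and> col b \<and> \<not> col w) \<and>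
     (\<forall>x\<in>nodes n. \<exists>!B. B \<in> \<rho> \<and> x \<in> B)"

definition partner :: "nat set set \<Rightarrow> nat \<Rightarrow> nat" where
  "partner \<rho> x = (THE y. {x, y} \<in> \<rho>)"

definition index_in :: "nat list \<Rightarrow> nat \<Rightarrow> nat" where
  "index_in xs x = (THE i. i < length xs \<and> xs ! i = x)"

definition blacks :: "nat \<Rightarrow> (nat \<Rightarrow> bool) \<Rightarrow> nat list" where
  "blacks n col = sorted_list_of_set {i \<in> nodes n. col i}"

definition whites :: "nat \<Rightarrow> (nat \<Rightarrow> bool) \<Rightarrow> nat list" where
  "whites n col = sorted_list_of_set {i \<in> nodes n. \<not> col i}"

text \<open>theta (0-indexed): rho(b_i) = w_theta(i); identity outside {0..<n}.\<close>
definition bw_theta :: "nat \<Rightarrow> (nat \<Rightarrow> bool) \<Rightarrow> nat set set \<Rightarrow> nat \<Rightarrow> nat" where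
  "bw_theta n col \<rho> i =
     (if i < n then index_in (whites n col) (partner \<rho> (blacks n col ! i)) else i)"

definition sign_BW :: "nat \<Rightarrow> (nat \<Rightarrow> bool) \<Rightarrow> nat set set \<Rightarrow> int" where
  "sign_BW n col \<rho> = sign (bw_theta n col \<rho>)"

definition a_count :: "(nat \<Rightarrow> bool) \<Rightarrow> nat \<Rightarrow> nat \<Rightarrow> nat" where
  "a_count col b w = card {m. min b w \<le> m \<and> m + 1 \<le> max b w \<and> col m = col (m + 1)}"

definition pair_sign :: "(nat \<Rightarrow> bool) \<Rightarrow> nat \<Rightarrow> nat \<Rightarrow> int" where
  "pair_sign col b w =
     (-1) ^ ((max b w - min b w + a_count col b w - 1) div 2)"

definition black_of :: "(nat \<Rightarrow> bool) \<Rightarrow> nat set \<Rightarrow> nat" where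
  "black_of col B = (THE b. b \<in> B \<and> col b)"

definition white_of :: "(nat \<Rightarrow> bool) \<Rightarrow> nat set \<Rightarrow> nat" where
  "white_of col B = (THE w. w \<in> B \<and> \<not> col w)"

text \<open>Crossings: pairs of blocks {a,c},{b,d} with a<b<c<d (each crossing counted once).\<close>
definition crossings :: "nat set set \<Rightarrow> nat" where
  "crossings \<rho> = card {(B1, B2). B1 \<in> \<rho> \<and> B2 \<in> \<rho> \<and>
      (\<exists>a b c d. a < b \<and> b < c \<and> c < d \<and> B1 = {a, c} \<and> B2 = {b, d})}"

definition cnext :: "nat \<Rightarrow> nat \<Rightarrow> nat" where
  "cnext n m = (if m = 2*n then 1 else m + 1)"

text \<open>First elements of couples of consecutive nodes of the same colour (indices mod 2n).\<close>
definition couples :: "nat \<Rightarrow> (nat \<Rightarrow> bool) \<Rightarrow> nat set" where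
  "couples n col = {m \<in> nodes n. col m = col (cnext n m)}"

definition black_couples :: "nat \<Rightarrow> (nat \<Rightarrow> bool) \<Rightarrow> nat list" where
  "black_couples n col = sorted_list_of_set {m \<in> couples n col. col m}"

definition white_couples :: "nat \<Rightarrow> (nat \<Rightarrow> bool) \<Rightarrow> nat list" where
  "white_couples n col = sorted_list_of_set {m \<in> couples n col. \<not> col m}"

text \<open>phi: if node 1 is black, phi(u_i) = 2i-1, phi(s_i) = 2i; if white, phi(s_i) = 2i-1, phi(u_i) = 2i
  (1-indexed i; below with 0-indexed list positions).\<close>
definition couple_phi :: "nat \<Rightarrow> (nat \<Rightarrow> bool) \<Rightarrow> nat \<Rightarrow> nat" where
  "couple_phi n col m =
     (if col m then
        (let i = index_in (black_couples n col) m in if col 1 then 2*i + 2 else 2*i + 1)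
      else
        (let i = index_in (white_couples n col) m in if col 1 then 2*i + 1 else 2*i + 2))"

text \<open>The permutation (phi(n_1),...,phi(n_{2k})) in one-line notation, shifted to 0-indexing
  (i |-> phi(n_{i+1}) - 1 on {0..<2k}, identity elsewhere).\<close>
definition couple_perm :: "nat \<Rightarrow> (nat \<Rightarrow> bool) \<Rightarrow> nat \<Rightarrow> nat" where
  "couple_perm n col i =
     (let C = sorted_list_of_set (couples n col) in
      if i < length C then couple_phi n col (C ! i) - 1 else i)"

definition sign_c :: "nat \<Rightarrow> (nat \<Rightarrow> bool) \<Rightarrow> int" where
  "sign_c n col = sign (couple_perm n col)"

end

theory Submission
  imports Defs
begin

text \<open>All signs are powers of \<open>-1\<close>, so the theorem is a statement about the parity of the
  exponents, and it splits into a part depending on the pairing and a part depending only on the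
  colouring (\<open>colour_exponent\<close>). On the pairing side, in padded positions \<open>d\<close> (see \<open>padded_pos\<close>)
  the colours alternate and the exponent of \<open>sign(b, w)\<close> is \<open>(|d b - d w| - 1) / 2\<close>, which has the
  parity of \<open>\<lfloor>d w / 2\<rfloor> + \<lceil>d b / 2\<rceil> + [w < b]\<close>. Comparing the blocks two at a time, the inversions
  of \<open>\<theta>\<close> plus the crossings have the parity of \<open>C(n, 2)\<close> plus the number of white nodes preceding
  black ones plus the number of blocks whose white node comes first; this last number cancels
  against the \<open>[w < b]\<close> terms. On the colouring side, \<open>sign\<^sub>c\<close> is the sign of a permutation
  interleaving the black and the white couples; its inversions have the parity of the number of black
  couples preceding white ones plus a term in the number of couples, and an induction along the nodes
  matches this with the colouring part of the exponent.\<close>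

section \<open>Inversions and the sign of a permutation\<close>

definition inversions :: "(nat \<Rightarrow> nat) \<Rightarrow> nat \<Rightarrow> nat" where
  "inversions p m = card {(i, j). i < j \<and> j < m \<and> p j < p i}"

lemma card_pairs_eq_sum:
  assumes "finite A" "finite B"
  shows "card {(x, y). x \<in> A \<and> y \<in> B \<and> Q x y} = (\<Sum>x\<in>A. \<Sum>y\<in>B. of_bool (Q x y) :: nat)"
proof -
  have "{(x, y). x \<in> A \<and> y \<in> B \<and> Q x y} = (A \<times> B) \<inter> {p. case_prod Q p}" by auto
  then have "card {(x, y). x \<in> A \<and> y \<in> B \<and> Q x y} = (\<Sum>p\<in>A \<times> B. of_bool (case_prod Q p))"
    using assms by (simp add: sum_of_bool_eq)
  also have "\<dots> = (\<Sum>x\<in>A. \<Sum>y\<in>B. of_bool (Q x y))"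
    by (simp add: sum.cartesian_product split_def)
  finally show ?thesis .
qed

lemma inversions_eq_sum: "inversions p m = (\<Sum>i<m. \<Sum>j<m. of_bool (i < j \<and> p j < p i))"
proof -
  have "{(i, j). i < j \<and> j < m \<and> p j < p i}
      = {(i, j). i \<in> {..<m} \<and> j \<in> {..<m} \<and> i < j \<and> p j < p i}" by auto
  then show ?thesis
    unfolding inversions_def
    using card_pairs_eq_sum[of "{..<m}" "{..<m}" "\<lambda>i j. i < j \<and> p j < p i"] by simp
qed

lemma finite_inversion_pairs: "finite {(i, j). i < j \<and> j < m \<and> (p :: nat \<Rightarrow> nat) j < p i}"
  by (rule finite_subset[of _ "{..<m} \<times> {..<m}"]) auto

lemma permutes_lessThan_no_descent_eq_id:
  assumes p: "p permutes {..<m}" and asc: "\<And>i. Suc i < m \<Longrightarrow> p i < p (Suc i)"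
  shows "p = id"
proof -
  have mono: "p i < p j" if "i < j" "j < m" for i j
    using that by (induction j) (auto simp: less_Suc_eq intro: asc less_trans)
  have "sorted (map p [0..<m])"
    by (auto simp: sorted_iff_nth_mono le_less intro: mono)
  moreover have "distinct (map p [0..<m])"
    by (simp add: distinct_map permutes_inj_on[OF p])
  moreover have "set (map p [0..<m]) = {..<m}"
    using permutes_image[OF p] by (simp add: atLeast0LessThan)
  ultimately have "map p [0..<m] = [0..<m]"
    by (intro sorted_distinct_set_unique) (auto simp: atLeast0LessThan)
  then have "p i = i" if "i < m" for i
    using that by (metis add_0 diff_zero length_upt nth_map nth_upt)
  then show ?thesis using p unfolding permutes_def by (metis eq_id_iff lessThan_iff)
qed

lemma inversions_adjacent_swap:
  assumes i: "Suc i < m" and descent: "p (Suc i) < (p i :: nat)"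
  shows "inversions p m = Suc (inversions (p \<circ> Transposition.transpose i (Suc i)) m)"
proof -
  let ?s = "Transposition.transpose i (Suc i)"
  let ?P = "{(a, b). a < b \<and> b < m \<and> p b < p a}"
  let ?Q = "{(a, b). a < b \<and> b < m \<and> (p \<circ> ?s) b < (p \<circ> ?s) a}"
  let ?g = "map_prod ?s ?s"
  have order: "a < b \<Longrightarrow> (a, b) \<noteq> (i, Suc i) \<Longrightarrow> ?s a < ?s b" for a b
    by (auto simp: Transposition.transpose_def)
  have bound: "b < m \<Longrightarrow> ?s b < m" for b
    using i by (auto simp: Transposition.transpose_def)
  have "?P - {(i, Suc i)} = ?g ` ?Q"
  proof (intro equalityI subsetI)
    fix x assume "x \<in> ?P - {(i, Suc i)}"
    then obtain a b where x: "x = (a, b)" "a < b" "b < m" "p b < p a" "(a, b) \<noteq> (i, Suc i)"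
      by auto
    then have "(?s a, ?s b) \<in> ?Q" using order bound by simp
    moreover have "x = ?g (?s a, ?s b)" using x by simp
    ultimately show "x \<in> ?g ` ?Q" by blast
  next
    fix x assume "x \<in> ?g ` ?Q"
    then obtain a b where ab: "a < b" "b < m" "p (?s b) < p (?s a)" and x: "x = (?s a, ?s b)"
      by auto
    have "(a, b) \<noteq> (i, Suc i)" using ab(3) descent by auto
    then have "?s a < ?s b" using order ab(1) by blast
    moreover have "(?s a, ?s b) \<noteq> (i, Suc i)"
      using ab(1) by (auto simp: Transposition.transpose_def split: if_splits)
    ultimately show "x \<in> ?P - {(i, Suc i)}" using x ab bound by simp
  qed
  moreover have "inj ?g" by (simp add: prod.inj_map)
  moreover have "(i, Suc i) \<in> ?P" using i descent by auto
  ultimately have "card ?P = Suc (card ?Q)"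
    using card_Suc_Diff1[OF finite_inversion_pairs, of "(i, Suc i)" m p]
    by (simp add: card_image inj_on_subset)
  then show ?thesis unfolding inversions_def .
qed

lemma sign_eq_inversions:
  assumes "p permutes {..<m}"
  shows "sign p = (-1 :: int) ^ inversions p m"
  using assms
proof (induction "inversions p m" arbitrary: p rule: less_induct)
  case less
  show ?case
  proof (cases "\<exists>i. Suc i < m \<and> p (Suc i) < p i")
    case False
    have "p = id"
    proof (rule permutes_lessThan_no_descent_eq_id[OF less.prems])
      fix i assume "Suc i < m"
      then show "p i < p (Suc i)"
        using False permutes_inj[OF less.prems] by (metis injD linorder_neqE_nat n_not_Suc_n)
    qed
    moreover have "inversions id m = 0" unfolding inversions_def by (simp add: card_eq_0_iff)
    ultimately show ?thesis by simp
  next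
    case True
    then obtain i where i: "Suc i < m" "p (Suc i) < p i" by blast
    let ?s = "Transposition.transpose i (Suc i)"
    have s: "?s permutes {..<m}" using i by (intro permutes_swap_id) auto
    have ps: "(p \<circ> ?s) permutes {..<m}" using permutes_compose[OF s less.prems] .
    have inv: "inversions p m = Suc (inversions (p \<circ> ?s) m)"
      using inversions_adjacent_swap[OF i] .
    have "sign (p \<circ> ?s) = sign p * sign ?s"
      using less.prems s by (intro sign_compose) (auto intro: permutation_permutes[THEN iffD2])
    then have "sign p = - sign (p \<circ> ?s)" by (simp add: sign_swap_id)
    also have "sign (p \<circ> ?s) = (-1) ^ inversions (p \<circ> ?s) m"
      using less.hyps[OF _ ps] inv by simp
    finally show ?thesis using inv by simp
  qed
qed

lemma minus_one_power_eq_of_even_add: "even (a + b) \<Longrightarrow> (-1 :: int) ^ a = (-1) ^ b"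
  by (metis even_add neg_one_even_power neg_one_odd_power)

lemma Suc_choose_two: "Suc k choose 2 = (k choose 2) + k"
  by (simp add: numeral_2_eq_2)

lemma choose_two_eq_sum: "k choose 2 = (\<Sum>i<k. \<Sum>j<k. of_bool (i < j) :: nat)"
proof (induction k)
  case (Suc k)
  have "(\<Sum>i<Suc k. \<Sum>j<Suc k. of_bool (i < j) :: nat) = (\<Sum>i<k. \<Sum>j<k. of_bool (i < j)) + k"
    by (auto simp: sum.distrib)
  then show ?case using Suc by (simp add: Suc_choose_two)
qed simp


lemma index_in_nth: "distinct xs \<Longrightarrow> i < length xs \<Longrightarrow> index_in xs (xs ! i) = i"
  unfolding index_in_def by (rule the_equality) (auto simp: nth_eq_iff_index_eq)

lemma index_in_sorted_list_of_set:
  assumes "finite A" "x \<in> A"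
  shows "index_in (sorted_list_of_set A) x < card A"
    and "sorted_list_of_set A ! index_in (sorted_list_of_set A) x = x"
  using assms index_in_nth[of "sorted_list_of_set A"]
  by (metis distinct_sorted_list_of_set in_set_conv_nth length_sorted_list_of_set
      set_sorted_list_of_set)+

lemma sorted_list_of_set_nth_less_iff:
  assumes "finite A" "i < card A" "j < card A"
  shows "sorted_list_of_set A ! i < sorted_list_of_set A ! j \<longleftrightarrow> i < j"
  using assms sorted_wrt_nth_less[OF strict_sorted_list_of_set[of A]]
  by (metis length_sorted_list_of_set less_asym linorder_neqE_nat)

lemma index_in_sorted_list_of_set_less_iff:
  assumes "finite A" "x \<in> A" "y \<in> A"
  shows "index_in (sorted_list_of_set A) x < index_in (sorted_list_of_set A) y \<longleftrightarrow> x < y"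
  using sorted_list_of_set_nth_less_iff[OF assms(1) index_in_sorted_list_of_set(1)[OF assms(1,2)]
      index_in_sorted_list_of_set(1)[OF assms(1,3)]]
  by (simp add: index_in_sorted_list_of_set(2) assms)

lemma bij_betw_nth_sorted_list_of_set:
  "finite A \<Longrightarrow> bij_betw ((!) (sorted_list_of_set A)) {..<card A} A"
  by (intro bij_betw_nth) simp_all

lemma bij_betw_index_in_sorted_list_of_set:
  assumes "finite A"
  shows "bij_betw (index_in (sorted_list_of_set A)) A {..<card A}"
proof (rule bij_betw_byWitness[where f' = "(!) (sorted_list_of_set A)"])
  show "index_in (sorted_list_of_set A) ` A \<subseteq> {..<card A}"
    using index_in_sorted_list_of_set(1)[OF assms] by auto
  show "(!) (sorted_list_of_set A) ` {..<card A} \<subseteq> A"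
    using bij_betw_nth_sorted_list_of_set[OF assms] by (simp add: bij_betw_def)
qed (use assms index_in_sorted_list_of_set(2) index_in_nth in auto)


section \<open>Interleaving permutations\<close>

definition interleave_slot :: "nat set \<Rightarrow> (nat \<Rightarrow> bool) \<Rightarrow> bool \<Rightarrow> nat \<Rightarrow> nat" where
  "interleave_slot S P t x =
     (if P x then (let i = index_in (sorted_list_of_set {y \<in> S. P y}) x in if t then 2*i + 2 else 2*i + 1)
      else (let i = index_in (sorted_list_of_set {y \<in> S. \<not> P y}) x in if t then 2*i + 1 else 2*i + 2))"

definition interleave_perm :: "nat set \<Rightarrow> (nat \<Rightarrow> bool) \<Rightarrow> bool \<Rightarrow> nat \<Rightarrow> nat" where
  "interleave_perm S P t i =
     (let C = sorted_list_of_set S in if i < length C then interleave_slot S P t (C ! i) - 1 else i)"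

locale interleaving =
  fixes S :: "nat set" and P :: "nat \<Rightarrow> bool" and k :: nat
  assumes finite_S: "finite S"
    and card_P: "card {x \<in> S. P x} = k" and card_not_P: "card {x \<in> S. \<not> P x} = k"
begin

definition rank :: "nat \<Rightarrow> nat" where
  "rank x = index_in (sorted_list_of_set {y \<in> S. P y = P x}) x"

lemma finite_class: "finite {y \<in> S. P y = b}"
  using finite_S by simp

lemma card_class: "card {y \<in> S. P y = b} = k"
  using card_P card_not_P by (cases b) simp_all

lemma interleave_slot_eq: "interleave_slot S P t x = 2 * rank x + (if P x = t then 2 else 1)"
  by (cases "P x") (simp_all add: interleave_slot_def rank_def Let_def)

lemma rank_less: "x \<in> S \<Longrightarrow> rank x < k"
  using index_in_sorted_list_of_set(1)[OF finite_class, of x "P x"] card_class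
  by (simp add: rank_def)

lemma rank_less_iff: "x \<in> S \<Longrightarrow> y \<in> S \<Longrightarrow> P x = P y \<Longrightarrow> rank x < rank y \<longleftrightarrow> x < y"
  using index_in_sorted_list_of_set_less_iff[OF finite_class, of x "P x" y]
  by (simp add: rank_def)

lemma odd_interleave_slot_iff: "odd (interleave_slot S P t x) \<longleftrightarrow> P x \<noteq> t"
  by (simp add: interleave_slot_eq)

lemma interleave_slot_inj:
  assumes "x \<in> S" "y \<in> S" "interleave_slot S P t x = interleave_slot S P t y"
  shows "x = y"
proof -
  have "P x = P y" using odd_interleave_slot_iff[of t x] odd_interleave_slot_iff[of t y] assms(3) by auto
  moreover from this have "rank x = rank y" using assms(3) by (simp add: interleave_slot_eq)
  ultimately show ?thesis
    using assms(1,2) rank_less_iff[of x y] rank_less_iff[of y x] by (metis linorder_neqE_nat less_irrefl)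
qed

lemma interleave_slot_bounds: "x \<in> S \<Longrightarrow> 1 \<le> interleave_slot S P t x \<and> interleave_slot S P t x \<le> 2 * k"
  using rank_less[of x] unfolding interleave_slot_eq by auto

lemma card_S: "card S = 2 * k"
proof -
  have "S = {y \<in> S. P y} \<union> {y \<in> S. \<not> P y}" by auto
  moreover have "card ({y \<in> S. P y} \<union> {y \<in> S. \<not> P y}) = k + k"
    using finite_S card_P card_not_P by (subst card_Un_disjoint) auto
  ultimately show ?thesis by simp
qed

lemma interleave_perm_eq: "i < 2 * k \<Longrightarrow> interleave_perm S P t i = interleave_slot S P t (sorted_list_of_set S ! i) - 1"
  by (simp add: interleave_perm_def card_S)

lemma interleave_perm_permutes: "interleave_perm S P t permutes {..<2 * k}"
proof (rule bij_imp_permutes)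
  let ?C = "(!) (sorted_list_of_set S)"
  have C: "bij_betw ?C {..<2 * k} S"
    using bij_betw_nth_sorted_list_of_set[OF finite_S] by (simp add: card_S)
  have inj: "inj_on (interleave_perm S P t) {..<2 * k}"
  proof (rule inj_onI)
    fix i j assume ij: "i \<in> {..<2 * k}" "j \<in> {..<2 * k}"
      and eq: "interleave_perm S P t i = interleave_perm S P t j"
    have in_S: "?C i \<in> S" "?C j \<in> S" using ij bij_betwE[OF C] by auto
    have "interleave_slot S P t (?C i) - 1 = interleave_slot S P t (?C j) - 1"
      using eq ij interleave_perm_eq by simp
    moreover have "1 \<le> interleave_slot S P t (?C i)" "1 \<le> interleave_slot S P t (?C j)"
      using interleave_slot_bounds in_S by auto
    ultimately have "interleave_slot S P t (?C i) = interleave_slot S P t (?C j)" by linarith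
    then have "?C i = ?C j" using interleave_slot_inj in_S by blast
    then show "i = j" using C ij by (auto simp: bij_betw_def inj_on_def)
  qed
  have "interleave_perm S P t ` {..<2 * k} \<subseteq> {..<2 * k}"
  proof (intro image_subsetI)
    fix i assume "i \<in> {..<2 * k}"
    then have "?C i \<in> S" using bij_betwE[OF C] by auto
    then show "interleave_perm S P t i \<in> {..<2 * k}"
      using interleave_slot_bounds[of "?C i" t] interleave_perm_eq \<open>i \<in> {..<2 * k}\<close> by auto
  qed
  then show "bij_betw (interleave_perm S P t) {..<2 * k} {..<2 * k}"
    using endo_inj_surj[OF finite_lessThan _ inj] inj by (simp add: bij_betw_def)
qed (simp add: interleave_perm_def card_S)

lemma inversions_interleave_perm:
  "inversions (interleave_perm S P t) (2 * k)
     = (\<Sum>x\<in>S. \<Sum>y\<in>S. of_bool (x < y \<and> interleave_slot S P t y < interleave_slot S P t x))"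
proof -
  let ?C = "(!) (sorted_list_of_set S)" and ?slot = "interleave_slot S P t"
  have C: "bij_betw ?C {..<2 * k} S"
    using bij_betw_nth_sorted_list_of_set[OF finite_S] by (simp add: card_S)
  have "inversions (interleave_perm S P t) (2 * k)
      = (\<Sum>i<2 * k. \<Sum>j<2 * k. of_bool (?C i < ?C j \<and> ?slot (?C j) < ?slot (?C i)))"
    unfolding inversions_eq_sum
  proof (intro sum.cong refl)
    fix i j assume ij: "i \<in> {..<2 * k}" "j \<in> {..<2 * k}"
    then have "?C i \<in> S" "?C j \<in> S" using bij_betwE[OF C] by auto
    then have "interleave_perm S P t j < interleave_perm S P t i \<longleftrightarrow> ?slot (?C j) < ?slot (?C i)"
      using ij interleave_perm_eq interleave_slot_bounds[of "?C i" t] interleave_slot_bounds[of "?C j" t] by auto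
    moreover have "i < j \<longleftrightarrow> ?C i < ?C j"
      using ij sorted_list_of_set_nth_less_iff[OF finite_S] by (simp add: card_S)
    ultimately show "of_bool (i < j \<and> interleave_perm S P t j < interleave_perm S P t i)
        = (of_bool (?C i < ?C j \<and> ?slot (?C j) < ?slot (?C i)) :: nat)"
      by simp
  qed
  also have "\<dots> = (\<Sum>i<2 * k. \<Sum>y\<in>S. of_bool (?C i < y \<and> ?slot y < ?slot (?C i)))"
    by (intro sum.cong refl sum.reindex_bij_betw[OF C])
  also have "\<dots> = (\<Sum>x\<in>S. \<Sum>y\<in>S. of_bool (x < y \<and> ?slot y < ?slot x))"
    by (rule sum.reindex_bij_betw[OF C])
  finally show ?thesis .
qed

lemma bij_betw_rank: "bij_betw rank {y \<in> S. P y = b} {..<k}"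
proof -
  have "bij_betw (index_in (sorted_list_of_set {y \<in> S. P y = b})) {y \<in> S. P y = b} {..<k}"
    using bij_betw_index_in_sorted_list_of_set[OF finite_class] card_class by metis
  then show ?thesis by (rule bij_betw_cong[THEN iffD1, rotated]) (simp add: rank_def)
qed

lemma sum_interleave_slot_less:
  "(\<Sum>x\<in>{y \<in> S. P y}. \<Sum>y\<in>{y \<in> S. \<not> P y}.
      of_bool (interleave_slot S P t x < interleave_slot S P t y) :: nat)
   = (k choose 2) + (if t then 0 else k)"
proof -
  let ?h = "\<lambda>j l. of_bool (if t then j < l else j \<le> l) :: nat"
  have "(\<Sum>x\<in>{y \<in> S. P y}. \<Sum>y\<in>{y \<in> S. \<not> P y}.
          of_bool (interleave_slot S P t x < interleave_slot S P t y) :: nat)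
      = (\<Sum>x\<in>{y \<in> S. P y = True}. \<Sum>y\<in>{y \<in> S. P y = False}. ?h (rank x) (rank y))"
    by (intro sum.cong refl) (auto simp: interleave_slot_eq)
  also have "\<dots> = (\<Sum>j<k. \<Sum>y\<in>{y \<in> S. P y = False}. ?h j (rank y))"
    by (rule sum.reindex_bij_betw[OF bij_betw_rank])
  also have "\<dots> = (\<Sum>j<k. \<Sum>l<k. ?h j l)"
    by (intro sum.cong refl sum.reindex_bij_betw[OF bij_betw_rank])
  also have "\<dots> = (\<Sum>j<k. \<Sum>l<k. of_bool (j < l) + (if t then 0 else of_bool (j = l)))"
    by (intro sum.cong refl) auto
  also have "\<dots> = (k choose 2) + (if t then 0 else k)"
    by (simp add: sum.distrib choose_two_eq_sum)
  finally show ?thesis .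
qed

lemma inversions_interleave_perm_cross_classes:
  "inversions (interleave_perm S P t) (2 * k)
     = (\<Sum>x\<in>{y \<in> S. P y}. \<Sum>y\<in>{y \<in> S. \<not> P y}.
          of_bool (x < y \<and> interleave_slot S P t y < interleave_slot S P t x)
        + of_bool (y < x \<and> interleave_slot S P t x < interleave_slot S P t y))"
proof -
  let ?slot = "interleave_slot S P t"
  let ?f = "\<lambda>x y. of_bool (x < y \<and> ?slot y < ?slot x) :: nat"
  let ?SP = "{y \<in> S. P y}" and ?SN = "{y \<in> S. \<not> P y}"
  have same_class: "?f x y = 0" if "x \<in> S" "y \<in> S" "P x = P y" for x y
    using that rank_less_iff[of x y] by (auto simp: interleave_slot_eq)
  have split: "(\<Sum>y\<in>S. g y) = (\<Sum>y\<in>?SP. g y) + (\<Sum>y\<in>?SN. g y)" for g :: "nat \<Rightarrow> nat"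
  proof -
    have "?SP \<union> ?SN = S" by auto
    then show ?thesis using sum.union_disjoint[of ?SP ?SN g] finite_S by auto
  qed
  have "(\<Sum>x\<in>?SP. \<Sum>y\<in>?SP. ?f x y) = 0" "(\<Sum>x\<in>?SN. \<Sum>y\<in>?SN. ?f x y) = 0"
    using same_class by (auto intro!: sum.neutral simp del: of_bool_eq_0_iff)
  then have "(\<Sum>x\<in>S. \<Sum>y\<in>S. ?f x y)
      = (\<Sum>x\<in>?SP. \<Sum>y\<in>?SN. ?f x y) + (\<Sum>x\<in>?SN. \<Sum>y\<in>?SP. ?f x y)"
    by (simp only: split sum.distrib)
  also have "(\<Sum>x\<in>?SN. \<Sum>y\<in>?SP. ?f x y) = (\<Sum>x\<in>?SP. \<Sum>y\<in>?SN. ?f y x)"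
    by (rule sum.swap)
  finally show ?thesis by (simp add: inversions_interleave_perm sum.distrib)
qed

lemma inversions_interleave_perm_parity:
  "even (inversions (interleave_perm S P t) (2 * k)
         + (\<Sum>x\<in>{y \<in> S. P y}. \<Sum>y\<in>{y \<in> S. \<not> P y}. of_bool (x < y))
         + (k choose 2) + (if t then 0 else k))"
proof -
  let ?slot = "interleave_slot S P t"
  let ?SP = "{y \<in> S. P y}" and ?SN = "{y \<in> S. \<not> P y}"
  have "even (of_bool (x < y \<and> ?slot y < ?slot x) + of_bool (y < x \<and> ?slot x < ?slot y)
              + of_bool (x < y) + of_bool (?slot x < ?slot y) :: nat)"
    if "x \<in> ?SP" "y \<in> ?SN" for x y
  proof -
    have "x \<noteq> y" "?slot x \<noteq> ?slot y" using that interleave_slot_inj by auto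
    then show ?thesis by (cases "x < y"; cases "?slot x < ?slot y") auto
  qed
  then have "even (\<Sum>x\<in>?SP. \<Sum>y\<in>?SN.
      of_bool (x < y \<and> ?slot y < ?slot x) + of_bool (y < x \<and> ?slot x < ?slot y)
      + of_bool (x < y) + of_bool (?slot x < ?slot y) :: nat)"
    by (intro dvd_sum) auto
  then show ?thesis
    by (simp add: sum.distrib inversions_interleave_perm_cross_classes sum_interleave_slot_less add.assoc)
qed

end


section \<open>Inversions and crossings of a black-white matching\<close>

definition chord_crosses :: "nat \<Rightarrow> nat \<Rightarrow> nat \<Rightarrow> nat \<Rightarrow> bool" where
  "chord_crosses x y u v \<longleftrightarrow> min x y < min u v \<and> min u v < max x y \<and> max x y < max u v"

lemma chord_crosses_iff:
  assumes "x \<noteq> y" "u \<noteq> v"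
  shows "(\<exists>a b c d. a < b \<and> b < c \<and> c < d \<and> {x, y} = {a, c} \<and> {u, v} = {b, d})
         \<longleftrightarrow> chord_crosses x y u v"
proof
  assume "\<exists>a b c d. a < b \<and> b < c \<and> c < d \<and> {x, y} = {a, c} \<and> {u, v} = {b, d}"
  then obtain a b c d where h: "a < b" "b < c" "c < d" "{x, y} = {a, c}" "{u, v} = {b, d}"
    by blast
  then have "min x y = a" "max x y = c" "min u v = b" "max u v = d"
    by (auto simp: doubleton_eq_iff)
  then show "chord_crosses x y u v" using h unfolding chord_crosses_def by simp
next
  assume "chord_crosses x y u v"
  then show "\<exists>a b c d. a < b \<and> b < c \<and> c < d \<and> {x, y} = {a, c} \<and> {u, v} = {b, d}"
    unfolding chord_crosses_def
    by (intro exI[of _ "min x y"] exI[of _ "min u v"] exI[of _ "max x y"] exI[of _ "max u v"])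
      (auto simp: min_def max_def doubleton_eq_iff)
qed

lemma chord_pair_parity:
  fixes x y u v :: nat
  assumes "x < u" "x \<noteq> y" "x \<noteq> v" "u \<noteq> y" "u \<noteq> v" "y \<noteq> v"
  shows "even (of_bool (v < y) + of_bool (chord_crosses x y u v) + of_bool (chord_crosses u v x y)
               + 1 + of_bool (y < u) + of_bool (v < x) :: nat)"
  using assms unfolding chord_crosses_def min_def max_def
  by (cases "x < y"; cases "u < v"; cases "y < u"; cases "v < x"; cases "y < v"; simp)

lemma sum_square_eq_upper_triangle:
  fixes f :: "nat \<Rightarrow> nat \<Rightarrow> nat"
  shows "(\<Sum>i<n. \<Sum>j<n. f i j)
         = (\<Sum>i<n. \<Sum>j<n. of_bool (i < j) * (f i j + f j i)) + (\<Sum>i<n. f i i)"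
proof -
  have "(\<Sum>i<n. \<Sum>j<n. f i j)
      = (\<Sum>i<n. \<Sum>j<n. of_bool (i < j) * f i j + of_bool (j < i) * f i j + of_bool (i = j) * f i j)"
    by (intro sum.cong refl) (auto simp: not_less_iff_gr_or_eq)
  also have "\<dots> = (\<Sum>i<n. \<Sum>j<n. of_bool (i < j) * f i j) + (\<Sum>i<n. \<Sum>j<n. of_bool (j < i) * f i j)
      + (\<Sum>i<n. \<Sum>j<n. of_bool (i = j) * f i j)"
    by (simp add: sum.distrib)
  also have "(\<Sum>i<n. \<Sum>j<n. of_bool (j < i) * f i j) = (\<Sum>i<n. \<Sum>j<n. of_bool (i < j) * f j i)"
    by (rule sum.swap)
  also have "(\<Sum>i<n. \<Sum>j<n. of_bool (i = j) * f i j) = (\<Sum>i<n. f i i)"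
  proof (intro sum.cong refl)
    fix i assume "i \<in> {..<n}"
    have "(\<Sum>j<n. of_bool (i = j) * f i j) = (\<Sum>j<n. if i = j then f i j else 0)"
      by (intro sum.cong refl) simp
    then show "(\<Sum>j<n. of_bool (i = j) * f i j) = f i i" using \<open>i \<in> {..<n}\<close> by simp
  qed
  finally show ?thesis by (simp add: sum.distrib distrib_left)
qed

lemma matching_inversions_crossings_parity:
  fixes b w :: "nat \<Rightarrow> nat"
  assumes b_mono: "\<And>i j. i < j \<Longrightarrow> j < n \<Longrightarrow> b i < b j"
    and b_ne_w: "\<And>i j. i < n \<Longrightarrow> j < n \<Longrightarrow> b i \<noteq> w j"
    and w_inj: "\<And>i j. i < n \<Longrightarrow> j < n \<Longrightarrow> w i = w j \<Longrightarrow> i = j"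
  shows "even ((\<Sum>i<n. \<Sum>j<n. of_bool (i < j \<and> w j < w i))
             + (\<Sum>i<n. \<Sum>j<n. of_bool (chord_crosses (b i) (w i) (b j) (w j)))
             + (n choose 2)
             + (\<Sum>i<n. \<Sum>j<n. of_bool (w i < b j))
             + (\<Sum>i<n. of_bool (w i < b i)) :: nat)"
proof -
  let ?cr = "\<lambda>i j. of_bool (chord_crosses (b i) (w i) (b j) (w j)) :: nat"
  let ?g = "\<lambda>i j. of_bool (i < j) * (of_bool (w j < w i) + (?cr i j + ?cr j i) + 1
                                     + (of_bool (w i < b j) + of_bool (w j < b i))) :: nat"
  have even_g: "even (\<Sum>i<n. \<Sum>j<n. ?g i j)"
  proof (intro dvd_sum)
    fix i j assume ij: "i \<in> {..<n}" "j \<in> {..<n}"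
    show "even (?g i j)"
    proof (cases "i < j")
      case True
      then have "w i \<noteq> w j" using w_inj[of i j] ij by auto
      then show ?thesis
        using chord_pair_parity[of "b i" "b j" "w i" "w j"] True ij b_mono[of i j] b_ne_w[of i j]
          b_ne_w[of j i] b_ne_w[of i i] b_ne_w[of j j]
        by (auto simp: add.assoc)
    qed simp
  qed
  have crossings: "(\<Sum>i<n. \<Sum>j<n. ?cr i j) = (\<Sum>i<n. \<Sum>j<n. of_bool (i < j) * (?cr i j + ?cr j i))"
    using sum_square_eq_upper_triangle[of ?cr n] by (simp add: chord_crosses_def)
  have before: "(\<Sum>i<n. \<Sum>j<n. of_bool (w i < b j) :: nat)
      = (\<Sum>i<n. \<Sum>j<n. of_bool (i < j) * (of_bool (w i < b j) + of_bool (w j < b i)))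
        + (\<Sum>i<n. of_bool (w i < b i))"
    using sum_square_eq_upper_triangle[of "\<lambda>i j. of_bool (w i < b j)" n] by simp
  have inversions: "(\<Sum>i<n. \<Sum>j<n. of_bool (i < j \<and> w j < w i) :: nat)
      = (\<Sum>i<n. \<Sum>j<n. of_bool (i < j) * of_bool (w j < w i))"
    by (intro sum.cong refl) simp
  have "(\<Sum>i<n. \<Sum>j<n. ?g i j) = (\<Sum>i<n. \<Sum>j<n. of_bool (i < j) * of_bool (w j < w i))
     + (\<Sum>i<n. \<Sum>j<n. of_bool (i < j) * (?cr i j + ?cr j i))
     + (\<Sum>i<n. \<Sum>j<n. of_bool (i < j))
     + (\<Sum>i<n. \<Sum>j<n. of_bool (i < j) * (of_bool (w i < b j) + of_bool (w j < b i)))"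
    by (simp add: sum.distrib distrib_left algebra_simps)
  then show ?thesis
    unfolding inversions crossings before choose_two_eq_sum using even_g by presburger
qed


primrec count_black :: "(nat \<Rightarrow> bool) \<Rightarrow> nat \<Rightarrow> nat" where
  "count_black c 0 = 0"
| "count_black c (Suc L) = count_black c L + of_bool (c (Suc L))"

primrec count_white :: "(nat \<Rightarrow> bool) \<Rightarrow> nat \<Rightarrow> nat" where
  "count_white c 0 = 0"
| "count_white c (Suc L) = count_white c L + of_bool (\<not> c (Suc L))"

primrec count_black_couples :: "(nat \<Rightarrow> bool) \<Rightarrow> nat \<Rightarrow> nat" where
  "count_black_couples c 0 = 0"
| "count_black_couples c (Suc L) = count_black_couples c L + of_bool (1 \<le> L \<and> c L \<and> c (Suc L))"

primrec count_white_couples :: "(nat \<Rightarrow> bool) \<Rightarrow> nat \<Rightarrow> nat" where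
  "count_white_couples c 0 = 0"
| "count_white_couples c (Suc L) =
     count_white_couples c L + of_bool (1 \<le> L \<and> \<not> c L \<and> \<not> c (Suc L))"

primrec white_black_pairs :: "(nat \<Rightarrow> bool) \<Rightarrow> nat \<Rightarrow> nat" where
  "white_black_pairs c 0 = 0"
| "white_black_pairs c (Suc L) = white_black_pairs c L + (if c (Suc L) then count_white c L else 0)"

primrec black_white_couple_pairs :: "(nat \<Rightarrow> bool) \<Rightarrow> nat \<Rightarrow> nat" where
  "black_white_couple_pairs c 0 = 0"
| "black_white_couple_pairs c (Suc L) =
     black_white_couple_pairs c L + (if 1 \<le> L \<and> \<not> c L \<and> \<not> c (Suc L) then count_black_couples c L else 0)"

text \<open>The position of node \<open>x\<close> after a node of the opposite colour has been inserted inside every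
  couple \<open>(m, m + 1)\<close> with \<open>m + 1 \<le> x\<close>; in the padded sequence the colours alternate.\<close>

definition padded_pos :: "(nat \<Rightarrow> bool) \<Rightarrow> nat \<Rightarrow> nat" where
  "padded_pos c x = x + count_black_couples c x + count_white_couples c x"

definition half_pos :: "(nat \<Rightarrow> bool) \<Rightarrow> nat \<Rightarrow> nat" where
  "half_pos c x = (if c x then (padded_pos c x + 1) div 2 else padded_pos c x div 2)"

definition prefix_correction :: "nat \<Rightarrow> nat \<Rightarrow> nat \<Rightarrow> nat \<Rightarrow> bool \<Rightarrow> nat" where
  "prefix_correction nb nw kb kw c1 =
     (nw choose 2) + (kb choose 2) + kb * kw + nb * kb + nw * kb + (if c1 then nb + nw + kb else 0)"

lemma count_black_plus_white: "count_black c L + count_white c L = L"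
  by (induction L) auto

lemma count_black_eq_card: "count_black c L = card {x \<in> {1..L}. c x}"
proof (induction L)
  case (Suc L)
  have "{x \<in> {1..Suc L}. c x} = (if c (Suc L) then insert (Suc L) {x \<in> {1..L}. c x} else {x \<in> {1..L}. c x})"
    by (auto simp: le_Suc_eq)
  then show ?case using Suc by simp
qed simp

lemma count_white_eq_card: "count_white c L = card {x \<in> {1..L}. \<not> c x}"
proof (induction L)
  case (Suc L)
  have "{x \<in> {1..Suc L}. \<not> c x} = (if c (Suc L) then {x \<in> {1..L}. \<not> c x} else insert (Suc L) {x \<in> {1..L}. \<not> c x})"
    by (auto simp: le_Suc_eq)
  then show ?case using Suc by simp
qed simp

lemma white_black_pairs_eq_sum:
  "white_black_pairs c L = (\<Sum>x\<in>{x \<in> {1..L}. \<not> c x}. \<Sum>y\<in>{y \<in> {1..L}. c y}. of_bool (x < y))"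
proof (induction L)
  case (Suc L)
  let ?W = "{x \<in> {1..L}. \<not> c x}" and ?B = "{y \<in> {1..L}. c y}"
  have fin: "finite ?W" "finite ?B" by simp_all
  show ?case
  proof (cases "c (Suc L)")
    case True
    then have "{x \<in> {1..Suc L}. \<not> c x} = ?W" "{y \<in> {1..Suc L}. c y} = insert (Suc L) ?B"
      by (auto simp: le_Suc_eq)
    moreover have "(\<Sum>x\<in>?W. of_bool (x < Suc L) :: nat) = card ?W"
      by (simp add: Int_absorb2 subset_eq)
    ultimately show ?thesis
      using True Suc by (simp add: sum.distrib count_white_eq_card del: sum_of_bool_eq cong: sum.cong)
  next
    case False
    then have "{x \<in> {1..Suc L}. \<not> c x} = insert (Suc L) ?W" "{y \<in> {1..Suc L}. c y} = ?B"
      by (auto simp: le_Suc_eq)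
    moreover have "(\<Sum>y\<in>?B. of_bool (Suc L < y) :: nat) = 0"
      by (rule sum.neutral) auto
    ultimately show ?thesis using False Suc fin by (simp del: sum_of_bool_eq)
  qed
qed simp

definition linear_couples :: "(nat \<Rightarrow> bool) \<Rightarrow> nat \<Rightarrow> bool \<Rightarrow> nat set" where
  "linear_couples c L b = {m. 1 \<le> m \<and> m + 1 \<le> L \<and> c m = b \<and> c (m + 1) = b}"

lemma finite_linear_couples: "finite (linear_couples c L b)"
  unfolding linear_couples_def by (rule finite_subset[of _ "{..L}"]) auto

lemma linear_couples_Suc:
  "linear_couples c (Suc L) b
     = (if 1 \<le> L \<and> c L = b \<and> c (Suc L) = b then insert L (linear_couples c L b) else linear_couples c L b)"
  by (auto simp: linear_couples_def le_Suc_eq)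

lemma count_black_couples_eq_card: "count_black_couples c L = card (linear_couples c L True)"
proof (induction L)
  case (Suc L)
  have "L \<notin> linear_couples c L True" by (simp add: linear_couples_def)
  then show ?case using Suc finite_linear_couples by (simp add: linear_couples_Suc)
qed (simp add: linear_couples_def)

lemma count_white_couples_eq_card: "count_white_couples c L = card (linear_couples c L False)"
proof (induction L)
  case (Suc L)
  have "L \<notin> linear_couples c L False" by (simp add: linear_couples_def)
  then show ?case using Suc finite_linear_couples by (simp add: linear_couples_Suc)
qed (simp add: linear_couples_def)

lemma black_white_couple_pairs_eq_sum:
  "black_white_couple_pairs c L = (\<Sum>x\<in>linear_couples c L True. \<Sum>y\<in>linear_couples c L False. of_bool (x < y))"
proof (induction L)
  case (Suc L)
  have notin: "L \<notin> linear_couples c L b" for b by (simp add: linear_couples_def)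
  have below: "y \<le> L" if "y \<in> linear_couples c L b" for y b using that by (simp add: linear_couples_def)
  consider "1 \<le> L" "c L" "c (Suc L)" | "1 \<le> L" "\<not> c L" "\<not> c (Suc L)"
    | "\<not> (1 \<le> L \<and> c L = c (Suc L))" by blast
  then show ?case
  proof cases
    case 1
    have "(\<Sum>y\<in>linear_couples c L False. of_bool (L < y) :: nat) = 0"
      using below by (intro sum.neutral) (auto simp: not_less)
    then show ?thesis
      using 1 Suc notin finite_linear_couples by (simp add: linear_couples_Suc del: sum_of_bool_eq)
  next
    case 2
    have "x < L" if "x \<in> linear_couples c L True" for x
      using below[OF that] notin[of True] that by (metis le_neq_implies_less)
    then have "(\<Sum>x\<in>linear_couples c L True. of_bool (x < L) :: nat) = (\<Sum>x\<in>linear_couples c L True. 1)"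
      by (intro sum.cong) auto
    then have "(\<Sum>x\<in>linear_couples c L True. of_bool (x < L) :: nat) = count_black_couples c L"
      by (simp add: count_black_couples_eq_card del: sum_of_bool_eq)
    then show ?thesis
      using 2 Suc notin finite_linear_couples
      by (simp add: linear_couples_Suc sum.distrib add.commute del: sum_of_bool_eq)
  next
    case 3
    then show ?thesis using Suc by (auto simp: linear_couples_Suc)
  qed
qed (simp add: linear_couples_def)

lemma couple_balance:
  "1 \<le> L \<Longrightarrow>
     2 * count_black_couples c L + 2 * count_white c L + of_bool (c 1) + of_bool (c L)
   = 2 * count_white_couples c L + 2 * count_black c L + of_bool (\<not> c 1) + of_bool (\<not> c L)"
proof (induction L rule: nat_induct_at_least)
  case (Suc L)
  then show ?case by (cases "c L"; cases "c (Suc L)") auto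
qed simp

lemma prefix_step_parity:
  fixes nb nw kb kw :: nat and c1 a z :: bool
  assumes balance: "2*kb + 2*nw + of_bool c1 + of_bool a = 2*kw + 2*nb + of_bool (\<not> c1) + of_bool (\<not> a)"
  shows "even ((if z then nw else 0) + (if \<not> a \<and> \<not> z then kb else 0)
               + (let d = nb + nw + kb + kw + 1 + of_bool (a = z) in if z then (d + 1) div 2 else d div 2)
               + prefix_correction (nb + of_bool z) (nw + of_bool (\<not> z))
                   (kb + of_bool (a \<and> z)) (kw + of_bool (\<not> a \<and> \<not> z)) c1
               + prefix_correction nb nw kb kw c1)"
    (is "even (?E + ?F' + ?F)")
proof -
  define inc where "inc = (if z then (if a then 2*kb + nw + 2 * of_bool c1 + (kw + nb + 1) else kb + of_bool c1)
                           else (if a then nw + kb + of_bool c1 else nw + 2*kb + of_bool c1))"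
  have correction: "?F' = ?F + inc"
    by (cases a; cases z; cases c1) (simp_all add: inc_def prefix_correction_def Suc_choose_two algebra_simps)
  have bal: "kw + nb + 1 = kb + nw + of_bool c1 + of_bool a"
    using balance by (cases a; cases c1) simp_all
  then have "nb + nw + kb + kw + 1 + of_bool (a = z) = 2 * (kb + nw) + (of_bool c1 + of_bool a + of_bool (a = z))"
    by simp
  then have "?E = (if z then nw else 0) + (if \<not> a \<and> \<not> z then kb else 0)
                  + (kb + nw + (of_bool c1 + of_bool a + of_bool (a = z) + of_bool z) div 2)"
    by (cases z) (simp_all add: Let_def)
  then have "even (?E + inc)"
    unfolding inc_def bal by (cases a; cases z; cases c1) (simp_all add: algebra_simps)
  moreover have "?E + ?F' + ?F = (?E + inc) + 2 * ?F" unfolding correction by simp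
  ultimately show ?thesis by (metis dvd_add dvd_triv_left)
qed

lemma padded_pos_Suc:
  "1 \<le> x \<Longrightarrow> padded_pos c (Suc x) = padded_pos c x + 1 + of_bool (c x = c (Suc x))"
  by (cases "c x"; cases "c (Suc x)") (simp_all add: padded_pos_def)

lemma prefix_parity:
  "1 \<le> L \<Longrightarrow>
   even (black_white_couple_pairs c L + white_black_pairs c L + (\<Sum>x\<in>{1..L}. half_pos c x)
         + prefix_correction (count_black c L) (count_white c L)
             (count_black_couples c L) (count_white_couples c L) (c 1))"
proof (induction L rule: nat_induct_at_least)
  case base
  then show ?case by (simp add: prefix_correction_def half_pos_def padded_pos_def numeral_2_eq_2)
next
  case (Suc L)
  let ?nb = "count_black c L" and ?nw = "count_white c L"
  let ?kb = "count_black_couples c L" and ?kw = "count_white_couples c L"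
  have half: "half_pos c (Suc L)
      = (let d = ?nb + ?nw + ?kb + ?kw + 1 + of_bool (c L = c (Suc L))
         in if c (Suc L) then (d + 1) div 2 else d div 2)"
  proof -
    have "padded_pos c L = ?nb + ?nw + ?kb + ?kw"
      by (simp add: padded_pos_def count_black_plus_white)
    then show ?thesis by (simp add: half_pos_def padded_pos_Suc[OF Suc.hyps] Let_def)
  qed
  have counts: "count_black c (Suc L) = ?nb + of_bool (c (Suc L))"
    "count_white c (Suc L) = ?nw + of_bool (\<not> c (Suc L))"
    "count_black_couples c (Suc L) = ?kb + of_bool (c L \<and> c (Suc L))"
    "count_white_couples c (Suc L) = ?kw + of_bool (\<not> c L \<and> \<not> c (Suc L))"
    using Suc.hyps by simp_all
  have sums: "black_white_couple_pairs c (Suc L) + white_black_pairs c (Suc L) + (\<Sum>x\<in>{1..Suc L}. half_pos c x)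
      = (black_white_couple_pairs c L + white_black_pairs c L + (\<Sum>x\<in>{1..L}. half_pos c x))
        + ((if c (Suc L) then ?nw else 0) + (if \<not> c L \<and> \<not> c (Suc L) then ?kb else 0)
           + half_pos c (Suc L))"
    using Suc.hyps by (simp add: atLeastAtMostSuc_conv)
  have shift: "even (a + f) \<Longrightarrow> even (b + f' + f) \<Longrightarrow> even (a + b + f')" for a b f f' :: nat
    by presburger
  show ?case
    unfolding sums counts
    by (rule shift[OF Suc.IH]) (use prefix_step_parity[OF couple_balance[OF Suc.hyps], of "c (Suc L)"] half in simp)
qed


section \<open>The exponent of a single pair\<close>

lemma odd_padded_pos_iff: "1 \<le> x \<Longrightarrow> odd (padded_pos c x) \<longleftrightarrow> c x = c 1"
proof (induction x rule: nat_induct_at_least)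
  case (Suc x)
  then show ?case by (cases "c x"; cases "c (Suc x)"; cases "c 1") (simp_all add: padded_pos_Suc)
qed (simp add: padded_pos_def)

lemma padded_pos_strict_mono: "1 \<le> x \<Longrightarrow> x < y \<Longrightarrow> padded_pos c x < padded_pos c y"
proof (induction y)
  case (Suc y)
  then show ?case using padded_pos_Suc[of y c] by (cases "x = y") auto
qed simp

lemma card_couples_upto:
  "count_black_couples c x + count_white_couples c x = card {m. 1 \<le> m \<and> m + 1 \<le> x \<and> c m = c (m + 1)}"
proof (induction x)
  case (Suc x)
  let ?S = "\<lambda>x. {m. 1 \<le> m \<and> m + 1 \<le> x \<and> c m = c (m + 1)}"
  have "?S (Suc x) = (if 1 \<le> x \<and> c x = c (Suc x) then insert x (?S x) else ?S x)"
    by (auto simp: le_Suc_eq)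
  moreover have "finite (?S x)" by (rule finite_subset[of _ "{..x}"]) auto
  ultimately show ?case using Suc by (cases "c x"; cases "c (Suc x)") auto
qed simp

lemma gap_plus_a_count:
  assumes "1 \<le> b" "1 \<le> w"
  shows "max b w - min b w + a_count c b w = padded_pos c (max b w) - padded_pos c (min b w)"
proof -
  let ?S = "\<lambda>x. {m. 1 \<le> m \<and> m + 1 \<le> x \<and> c m = c (m + 1)}"
  have sub: "?S (min b w) \<subseteq> ?S (max b w)" by auto
  have fin: "finite (?S (max b w))" by (rule finite_subset[of _ "{..max b w}"]) auto
  have "{m. min b w \<le> m \<and> m + 1 \<le> max b w \<and> c m = c (m + 1)} = ?S (max b w) - ?S (min b w)"
    using assms by auto
  then have "a_count c b w = card (?S (max b w)) - card (?S (min b w))"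
    unfolding a_count_def using card_Diff_subset[OF finite_subset[OF sub fin] sub] by simp
  moreover have "card (?S (min b w)) \<le> card (?S (max b w))" using card_mono[OF fin sub] .
  moreover have "padded_pos c x = x + card (?S x)" for x
    by (simp add: padded_pos_def card_couples_upto add.assoc)
  ultimately show ?thesis by (simp del: max_def min_def)
qed

lemma half_gap_parity:
  fixes db dw :: nat
  assumes "db \<noteq> dw" "odd (db + dw)"
  shows "even ((max db dw - min db dw - 1) div 2 + dw div 2 + (db + 1) div 2 + of_bool (dw < db))"
  using assms by (cases "db < dw") (simp_all add: max_def min_def, presburger+)

lemma pair_sign_exponent_parity:
  assumes "1 \<le> b" "1 \<le> w" "c b" "\<not> c w"
  shows "even ((max b w - min b w + a_count c b w - 1) div 2
               + half_pos c w + half_pos c b + of_bool (w < b))"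
proof -
  let ?db = "padded_pos c b" and ?dw = "padded_pos c w"
  have "b \<noteq> w" using assms(3,4) by auto
  then have order: "w < b \<longleftrightarrow> ?dw < ?db" and ne: "?db \<noteq> ?dw"
    using padded_pos_strict_mono[OF assms(1), of w c] padded_pos_strict_mono[OF assms(2), of b c]
    by (auto simp: linorder_neq_iff)
  have gap: "max b w - min b w + a_count c b w = max ?db ?dw - min ?db ?dw"
    using gap_plus_a_count[OF assms(1,2), of c] order by (cases "w < b") (simp_all add: max_def min_def)
  have "odd ?db \<noteq> odd ?dw"
    using odd_padded_pos_iff[OF assms(1)] odd_padded_pos_iff[OF assms(2)] assms(3,4)
    by (cases "c 1") simp_all
  then have "odd (?db + ?dw)" by simp
  then show ?thesis
    using half_gap_parity[OF ne] assms(3,4) unfolding gap order by (simp add: half_pos_def)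
qed


section \<open>The pairing side\<close>

definition colour_exponent :: "nat \<Rightarrow> (nat \<Rightarrow> bool) \<Rightarrow> nat" where
  "colour_exponent n col =
     (n choose 2) + white_black_pairs col (2 * n) + (\<Sum>x\<in>nodes n. half_pos col x)"

lemma black_of_eq: "c b \<Longrightarrow> \<not> c w \<Longrightarrow> black_of c {b, w} = b"
  unfolding black_of_def by (rule the_equality) auto

lemma white_of_eq: "c b \<Longrightarrow> \<not> c w \<Longrightarrow> white_of c {b, w} = w"
  unfolding white_of_def by (rule the_equality) auto

locale black_white_pairing =
  fixes n :: nat and col :: "nat \<Rightarrow> bool" and \<rho> :: "nat set set"
  assumes balanced: "balanced_colouring n col" and pairing: "bw_pairing n col \<rho>"
begin

abbreviation black_nodes :: "nat set" where "black_nodes \<equiv> {i \<in> nodes n. col i}"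
abbreviation white_nodes :: "nat set" where "white_nodes \<equiv> {i \<in> nodes n. \<not> col i}"

lemma finite_nodes: "finite (nodes n)"
  by (simp add: nodes_def)

lemma card_black_nodes: "card black_nodes = n"
  using balanced by (simp add: balanced_colouring_def)

lemma card_white_nodes: "card white_nodes = n"
proof -
  have "nodes n = black_nodes \<union> white_nodes" "black_nodes \<inter> white_nodes = {}" by auto
  then have "card (nodes n) = card black_nodes + card white_nodes"
    using card_Un_disjoint[of black_nodes white_nodes] finite_nodes by simp
  then show ?thesis using card_black_nodes by (simp add: nodes_def)
qed

lemma block_shape: "B \<in> \<rho> \<Longrightarrow> \<exists>b w. B = {b, w} \<and> b \<in> nodes n \<and> w \<in> nodes n \<and> col b \<and> \<not> col w"
  using pairing by (simp add: bw_pairing_def)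

lemma unique_block: "x \<in> nodes n \<Longrightarrow> \<exists>!B. B \<in> \<rho> \<and> x \<in> B"
  using pairing by (simp add: bw_pairing_def)

definition block_of :: "nat \<Rightarrow> nat set" where
  "block_of x = (THE B. B \<in> \<rho> \<and> x \<in> B)"

lemma block_of: "x \<in> nodes n \<Longrightarrow> block_of x \<in> \<rho> \<and> x \<in> block_of x"
  unfolding block_of_def using theI'[OF unique_block] by blast

lemma block_of_unique: "x \<in> nodes n \<Longrightarrow> B \<in> \<rho> \<Longrightarrow> x \<in> B \<Longrightarrow> block_of x = B"
  unfolding block_of_def using unique_block by (metis (mono_tags, lifting) the_equality)

lemma block_of_black:
  assumes "b \<in> black_nodes"
  shows "block_of b = {b, white_of col (block_of b)} \<and> black_of col (block_of b) = b
    \<and> white_of col (block_of b) \<in> white_nodes"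
proof -
  have b: "b \<in> nodes n" "col b" using assms by auto
  obtain b' w where bw: "block_of b = {b', w}" "b' \<in> nodes n" "w \<in> nodes n" "col b'" "\<not> col w"
    using block_shape block_of[OF b(1)] by blast
  have "b = b'" using block_of[OF b(1)] bw b(2) by auto
  then show ?thesis using bw white_of_eq black_of_eq by auto
qed

lemma partner_black:
  assumes "b \<in> black_nodes"
  shows "partner \<rho> b = white_of col (block_of b)"
proof -
  let ?w = "white_of col (block_of b)"
  have b: "b \<in> nodes n" "col b" using assms by auto
  have B: "block_of b = {b, ?w}" and "?w \<in> white_nodes" using block_of_black[OF assms] by auto
  then have "?w \<noteq> b" using b by auto
  show ?thesis unfolding partner_def
  proof (rule the_equality)
    show "{b, ?w} \<in> \<rho>" using block_of[OF b(1)] B by simp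
  next
    fix y assume "{b, y} \<in> \<rho>"
    then have "block_of b = {b, y}" using block_of_unique[OF b(1)] by simp
    then show "y = ?w" using B \<open>?w \<noteq> b\<close> by (auto simp: doubleton_eq_iff)
  qed
qed

definition black :: "nat \<Rightarrow> nat" where
  "black i = blacks n col ! i"

definition mate :: "nat \<Rightarrow> nat" where
  "mate i = white_of col (block_of (black i))"

lemma bij_betw_black: "bij_betw black {..<n} black_nodes"
  unfolding black_def[abs_def] blacks_def
  using bij_betw_nth_sorted_list_of_set[of black_nodes] finite_nodes card_black_nodes by simp

lemma black_in: "i < n \<Longrightarrow> black i \<in> black_nodes"
  using bij_betw_black by (auto dest: bij_betwE)

lemma black_strict_mono: "i < j \<Longrightarrow> j < n \<Longrightarrow> black i < black j"
  unfolding black_def blacks_def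
  using sorted_list_of_set_nth_less_iff[of black_nodes i j] finite_nodes card_black_nodes by simp

lemma block_of_black_nth:
  "i < n \<Longrightarrow> block_of (black i) = {black i, mate i} \<and> black_of col (block_of (black i)) = black i
     \<and> mate i \<in> white_nodes"
  using block_of_black[OF black_in] by (simp add: mate_def)

lemma black_ne_mate: "i < n \<Longrightarrow> j < n \<Longrightarrow> black i \<noteq> mate j"
  using black_in[of i] block_of_black_nth[of j] by auto

lemma mate_inj:
  assumes i: "i < n" and j: "j < n" and eq: "mate i = mate j"
  shows "i = j"
proof -
  have w: "mate i \<in> nodes n" using block_of_black_nth[OF i] by simp
  have "block_of (mate i) = block_of (black i)"
    using block_of_unique[OF w] block_of black_in[OF i] block_of_black_nth[OF i] by auto
  moreover have "block_of (mate i) = block_of (black j)"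
    using block_of_unique[OF w] block_of black_in[OF j] block_of_black_nth[OF j] eq by auto
  ultimately have "black i = black j" using block_of_black_nth[OF i] block_of_black_nth[OF j] by metis
  then show "i = j" using bij_betw_black i j unfolding bij_betw_def inj_on_def by blast
qed

lemma bij_betw_mate: "bij_betw mate {..<n} white_nodes"
proof -
  have inj: "inj_on mate {..<n}" using mate_inj by (auto intro: inj_onI)
  have sub: "mate ` {..<n} \<subseteq> white_nodes" using block_of_black_nth by auto
  have "card (mate ` {..<n}) = card white_nodes" using card_image[OF inj] card_white_nodes by simp
  then have "mate ` {..<n} = white_nodes" using card_subset_eq[OF _ sub] finite_nodes by simp
  then show ?thesis using inj by (simp add: bij_betw_def)
qed

lemma bij_betw_block: "bij_betw (\<lambda>i. block_of (black i)) {..<n} \<rho>"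
proof (rule bij_betw_imageI)
  show "inj_on (\<lambda>i. block_of (black i)) {..<n}"
  proof (rule inj_onI)
    fix i j assume "i \<in> {..<n}" "j \<in> {..<n}" "block_of (black i) = block_of (black j)"
    then have "black i = black j" using block_of_black_nth by (metis lessThan_iff)
    then show "i = j" using bij_betw_black \<open>i \<in> {..<n}\<close> \<open>j \<in> {..<n}\<close>
      unfolding bij_betw_def inj_on_def by blast
  qed
  show "(\<lambda>i. block_of (black i)) ` {..<n} = \<rho>"
  proof
    show "(\<lambda>i. block_of (black i)) ` {..<n} \<subseteq> \<rho>"
      using block_of black_in by blast
    show "\<rho> \<subseteq> (\<lambda>i. block_of (black i)) ` {..<n}"
    proof
      fix B assume B: "B \<in> \<rho>"
      then obtain b w where bw: "B = {b, w}" "b \<in> nodes n" "col b" using block_shape by blast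
      then have "b \<in> black ` {..<n}" using bij_betw_black by (simp add: bij_betw_def)
      then obtain i where i: "i < n" "black i = b" by auto
      have "block_of b = B" using block_of_unique[OF bw(2) B] bw by simp
      then show "B \<in> (\<lambda>i. block_of (black i)) ` {..<n}" using i by auto
    qed
  qed
qed

lemma sign_BW_eq: "sign_BW n col \<rho> = (-1) ^ (\<Sum>i<n. \<Sum>j<n. of_bool (i < j \<and> mate j < mate i))"
proof -
  let ?W = "sorted_list_of_set white_nodes"
  have theta: "bw_theta n col \<rho> i = index_in ?W (mate i)" if "i < n" for i
    using that partner_black[OF black_in[OF that]]
    by (simp add: bw_theta_def whites_def black_def[symmetric] mate_def)
  have "bij_betw (index_in ?W \<circ> mate) {..<n} {..<n}"
    using bij_betw_trans[OF bij_betw_mate bij_betw_index_in_sorted_list_of_set[of white_nodes]]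
      finite_nodes card_white_nodes by simp
  then have "bij_betw (bw_theta n col \<rho>) {..<n} {..<n}"
    by (rule bij_betw_cong[THEN iffD1, rotated]) (simp add: theta)
  then have perm: "bw_theta n col \<rho> permutes {..<n}"
    by (rule bij_imp_permutes) (simp add: bw_theta_def)
  have "inversions (bw_theta n col \<rho>) n = (\<Sum>i<n. \<Sum>j<n. of_bool (i < j \<and> mate j < mate i))"
    unfolding inversions_eq_sum
  proof (intro sum.cong refl)
    fix i j assume "i \<in> {..<n}" "j \<in> {..<n}"
    then show "of_bool (i < j \<and> bw_theta n col \<rho> j < bw_theta n col \<rho> i)
        = (of_bool (i < j \<and> mate j < mate i) :: nat)"
      using theta index_in_sorted_list_of_set_less_iff[of white_nodes] finite_nodes block_of_black_nth
      by auto
  qed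
  then show ?thesis unfolding sign_BW_def using sign_eq_inversions[OF perm] by simp
qed

lemma crossings_eq:
  "crossings \<rho> = (\<Sum>i<n. \<Sum>j<n. of_bool (chord_crosses (black i) (mate i) (black j) (mate j)))"
proof -
  define cross where "cross B1 B2 \<longleftrightarrow>
    (\<exists>a b c d. a < (b :: nat) \<and> b < c \<and> c < d \<and> B1 = {a, c} \<and> B2 = {b, d})" for B1 B2
  have fin: "finite \<rho>" using bij_betw_block by (metis bij_betw_imp_surj_on finite_imageI finite_lessThan)
  have "crossings \<rho> = (\<Sum>B1\<in>\<rho>. \<Sum>B2\<in>\<rho>. of_bool (cross B1 B2))"
    unfolding crossings_def cross_def[abs_def] by (rule card_pairs_eq_sum[OF fin fin])
  also have "\<dots> = (\<Sum>i<n. \<Sum>B2\<in>\<rho>. of_bool (cross (block_of (black i)) B2))"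
    by (rule sum.reindex_bij_betw[OF bij_betw_block, symmetric])
  also have "\<dots> = (\<Sum>i<n. \<Sum>j<n. of_bool (cross (block_of (black i)) (block_of (black j))))"
    by (intro sum.cong refl sum.reindex_bij_betw[OF bij_betw_block, symmetric])
  also have "\<dots> = (\<Sum>i<n. \<Sum>j<n. of_bool (chord_crosses (black i) (mate i) (black j) (mate j)))"
  proof (intro sum.cong refl)
    fix i j assume "i \<in> {..<n}" "j \<in> {..<n}"
    then show "of_bool (cross (block_of (black i)) (block_of (black j)))
        = (of_bool (chord_crosses (black i) (mate i) (black j) (mate j)) :: nat)"
      using block_of_black_nth black_ne_mate chord_crosses_iff unfolding cross_def by simp
  qed
  finally show ?thesis .
qed

definition pair_exponent :: "nat \<Rightarrow> nat" where
  "pair_exponent i =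
     (max (black i) (mate i) - min (black i) (mate i) + a_count col (black i) (mate i) - 1) div 2"

lemma prod_pair_sign_eq:
  "(\<Prod>B\<in>\<rho>. pair_sign col (black_of col B) (white_of col B)) = (-1) ^ (\<Sum>i<n. pair_exponent i)"
proof -
  have "(\<Prod>B\<in>\<rho>. pair_sign col (black_of col B) (white_of col B))
      = (\<Prod>i<n. pair_sign col (black_of col (block_of (black i))) (white_of col (block_of (black i))))"
    by (rule prod.reindex_bij_betw[OF bij_betw_block, symmetric])
  also have "\<dots> = (\<Prod>i<n. (-1) ^ pair_exponent i)"
  proof (intro prod.cong refl)
    fix i assume "i \<in> {..<n}"
    then have "black_of col (block_of (black i)) = black i" "white_of col (block_of (black i)) = mate i"
      using block_of_black_nth by (simp_all add: mate_def)
    then show "pair_sign col (black_of col (block_of (black i))) (white_of col (block_of (black i)))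
        = (-1) ^ pair_exponent i"
      by (simp only: pair_sign_def pair_exponent_def)
  qed
  also have "\<dots> = (-1) ^ (\<Sum>i<n. pair_exponent i)" by (rule power_sum[symmetric])
  finally show ?thesis .
qed

lemma sum_half_pos_parity:
  "even ((\<Sum>i<n. pair_exponent i) + (\<Sum>x\<in>white_nodes. half_pos col x)
         + (\<Sum>x\<in>black_nodes. half_pos col x) + (\<Sum>i<n. of_bool (mate i < black i)))"
proof -
  have "(\<Sum>x\<in>white_nodes. half_pos col x) = (\<Sum>i<n. half_pos col (mate i))"
    by (rule sum.reindex_bij_betw[OF bij_betw_mate, symmetric])
  moreover have "(\<Sum>x\<in>black_nodes. half_pos col x) = (\<Sum>i<n. half_pos col (black i))"
    by (rule sum.reindex_bij_betw[OF bij_betw_black, symmetric])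
  moreover have "even (\<Sum>i<n. pair_exponent i + half_pos col (mate i) + half_pos col (black i)
                              + of_bool (mate i < black i))"
  proof (intro dvd_sum)
    fix i assume "i \<in> {..<n}"
    then have "black i \<in> black_nodes" "mate i \<in> white_nodes"
      using black_in block_of_black_nth by auto
    then show "even (pair_exponent i + half_pos col (mate i) + half_pos col (black i)
                     + of_bool (mate i < black i))"
      unfolding pair_exponent_def by (intro pair_sign_exponent_parity) (auto simp: nodes_def)
  qed
  ultimately show ?thesis by (simp add: sum.distrib)
qed

lemma white_black_pairs_eq:
  "white_black_pairs col (2 * n) = (\<Sum>i<n. \<Sum>j<n. of_bool (mate i < black j))"
proof -
  have "{x \<in> {1..2 * n}. \<not> col x} = white_nodes" "{x \<in> {1..2 * n}. col x} = black_nodes"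
    by (auto simp: nodes_def)
  then have "white_black_pairs col (2 * n) = (\<Sum>x\<in>white_nodes. \<Sum>y\<in>black_nodes. of_bool (x < y))"
    by (simp only: white_black_pairs_eq_sum)
  also have "\<dots> = (\<Sum>i<n. \<Sum>y\<in>black_nodes. of_bool (mate i < y))"
    by (rule sum.reindex_bij_betw[OF bij_betw_mate, symmetric])
  also have "\<dots> = (\<Sum>i<n. \<Sum>j<n. of_bool (mate i < black j))"
    by (intro sum.cong refl sum.reindex_bij_betw[OF bij_betw_black, symmetric])
  finally show ?thesis .
qed

lemma sum_half_pos_nodes:
  "(\<Sum>x\<in>nodes n. half_pos col x) = (\<Sum>x\<in>white_nodes. half_pos col x) + (\<Sum>x\<in>black_nodes. half_pos col x)"
proof -
  have "nodes n = white_nodes \<union> black_nodes" by auto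
  then show ?thesis using finite_nodes by (simp add: sum.union_disjoint[symmetric] Int_def)
qed

theorem pairing_sign:
  "sign_BW n col \<rho> * (\<Prod>B\<in>\<rho>. pair_sign col (black_of col B) (white_of col B))
   = (-1) ^ (crossings \<rho> + colour_exponent n col)"
proof -
  define inv where "inv = (\<Sum>i<n. \<Sum>j<n. of_bool (i < j \<and> mate j < mate i) :: nat)"
  define before where "before = (\<Sum>i<n. of_bool (mate i < black i) :: nat)"
  have "even (inv + crossings \<rho> + (n choose 2) + white_black_pairs col (2 * n) + before)"
    unfolding inv_def before_def crossings_eq white_black_pairs_eq
    using black_strict_mono black_ne_mate mate_inj by (rule matching_inversions_crossings_parity)
  moreover have "even ((\<Sum>i<n. pair_exponent i) + (\<Sum>x\<in>nodes n. half_pos col x) + before)"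
    using sum_half_pos_parity unfolding before_def sum_half_pos_nodes by (simp add: add.assoc)
  moreover have "even (i + c + k + w + b) \<Longrightarrow> even (e + h + b) \<Longrightarrow> even ((i + e) + (c + (k + w + h)))"
    for i c k w b e h :: nat
    by presburger
  ultimately have "even ((inv + (\<Sum>i<n. pair_exponent i)) + (crossings \<rho> + colour_exponent n col))"
    unfolding colour_exponent_def by blast
  then have "(-1 :: int) ^ (inv + (\<Sum>i<n. pair_exponent i)) = (-1) ^ (crossings \<rho> + colour_exponent n col)"
    by (rule minus_one_power_eq_of_even_add)
  then show ?thesis unfolding sign_BW_eq prod_pair_sign_eq inv_def by (simp add: power_add)
qed

end


section \<open>The colouring side\<close>

lemma couple_class_eq:
  "1 \<le> n \<Longrightarrow> {m \<in> couples n col. col m = b}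
     = linear_couples col (2 * n) b \<union> (if col (2 * n) = b \<and> col 1 = b then {2 * n} else {})"
  unfolding couples_def nodes_def cnext_def linear_couples_def by (auto split: if_splits)

lemma card_couple_class:
  assumes "1 \<le> n"
  shows "card {m \<in> couples n col. col m = b}
         = card (linear_couples col (2 * n) b) + of_bool (col (2 * n) = b \<and> col 1 = b)"
proof -
  have "2 * n \<notin> linear_couples col (2 * n) b" by (simp add: linear_couples_def)
  then show ?thesis using couple_class_eq[OF assms] finite_linear_couples by simp
qed

lemma couple_perm_eq_interleave_perm: "couple_perm n col = interleave_perm (couples n col) col (col 1)"
  by (rule ext)
    (simp add: couple_perm_def interleave_perm_def couple_phi_def interleave_slot_def
      black_couples_def white_couples_def)

lemma couple_cross_pairs_eq:
  assumes n: "1 \<le> n"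
  shows "(\<Sum>x\<in>{m \<in> couples n col. col m}. \<Sum>y\<in>{m \<in> couples n col. \<not> col m}. of_bool (x < y))
         = black_white_couple_pairs col (2 * n)
           + (if \<not> col 1 \<and> \<not> col (2 * n) then count_black_couples col (2 * n) else 0)"
proof -
  let ?LB = "linear_couples col (2 * n) True" and ?LW = "linear_couples col (2 * n) False"
  have notin: "2 * n \<notin> ?LB" "2 * n \<notin> ?LW" by (auto simp: linear_couples_def)
  have B: "{m \<in> couples n col. col m} = ?LB \<union> (if col (2 * n) \<and> col 1 then {2 * n} else {})"
    and W: "{m \<in> couples n col. \<not> col m} = ?LW \<union> (if \<not> col (2 * n) \<and> \<not> col 1 then {2 * n} else {})"
    using couple_class_eq[OF n, of col True] couple_class_eq[OF n, of col False] by simp_all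
  consider "col 1" "col (2 * n)" | "\<not> col 1" "\<not> col (2 * n)" | "col 1 \<noteq> col (2 * n)" by blast
  then show ?thesis
  proof cases
    case 1
    have "(\<Sum>y\<in>?LW. of_bool (2 * n < y) :: nat) = 0"
      by (intro sum.neutral) (auto simp: linear_couples_def)
    then show ?thesis
      unfolding B W black_white_couple_pairs_eq_sum using 1 notin finite_linear_couples by (simp del: sum_of_bool_eq)
  next
    case 2
    have "(\<Sum>x\<in>?LB. of_bool (x < 2 * n) :: nat) = (\<Sum>x\<in>?LB. 1)"
      by (intro sum.cong) (auto simp: linear_couples_def)
    then show ?thesis
      unfolding B W black_white_couple_pairs_eq_sum count_black_couples_eq_card using 2 notin finite_linear_couples
      by (simp add: sum.distrib del: sum_of_bool_eq)
  next
    case 3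
    then show ?thesis unfolding B W black_white_couple_pairs_eq_sum by (cases "col 1") simp_all
  qed
qed

lemma wrap_around_parity:
  fixes w kb kw k n :: nat
  assumes "k = kb + of_bool (c1 \<and> cl)" "k = kw + of_bool (\<not> c1 \<and> \<not> cl)"
  shows "even ((w + (if \<not> c1 \<and> \<not> cl then kb else 0)) + (k choose 2) + (if c1 then 0 else k)
               + (n choose 2) + w + prefix_correction n n kb kw c1)"
  using assms by (cases c1; cases cl) (auto simp add: prefix_correction_def Suc_choose_two algebra_simps)

lemma sign_c_zero: "sign_c 0 col = 1"
proof -
  have "couple_perm 0 col = id" by (auto simp: couple_perm_def couples_def nodes_def)
  then show ?thesis by (simp add: sign_c_def)
qed

lemma count_black_white_balanced:
  assumes "balanced_colouring n col"
  shows "count_black col (2 * n) = n" "count_white col (2 * n) = n"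
proof -
  have "{x \<in> {1..2 * n}. col x} = {i \<in> nodes n. col i}" by (auto simp: nodes_def)
  then show black: "count_black col (2 * n) = n"
    using assms by (simp add: count_black_eq_card balanced_colouring_def)
  then show "count_white col (2 * n) = n"
    using count_black_plus_white[of col "2 * n"] by simp
qed

lemma card_couple_classes:
  assumes "balanced_colouring n col" "1 \<le> n"
  defines "k \<equiv> card {m \<in> couples n col. col m}"
  shows "k = count_black_couples col (2 * n) + of_bool (col 1 \<and> col (2 * n))"
    and "k = count_white_couples col (2 * n) + of_bool (\<not> col 1 \<and> \<not> col (2 * n))"
    and "card {m \<in> couples n col. \<not> col m} = k"
proof -
  let ?kb = "count_black_couples col (2 * n)" and ?kw = "count_white_couples col (2 * n)"
  show k_black: "k = ?kb + of_bool (col 1 \<and> col (2 * n))"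
    using card_couple_class[OF assms(2), of col True] unfolding k_def count_black_couples_eq_card by auto
  have "card {m \<in> couples n col. \<not> col m} = ?kw + of_bool (\<not> col 1 \<and> \<not> col (2 * n))"
    using card_couple_class[OF assms(2), of col False] unfolding count_white_couples_eq_card by auto
  moreover have "2 * ?kb + of_bool (col 1) + of_bool (col (2 * n))
                 = 2 * ?kw + of_bool (\<not> col 1) + of_bool (\<not> col (2 * n))"
    using couple_balance[of "2 * n" col] assms(2) count_black_white_balanced[OF assms(1)] by simp
  ultimately show "k = ?kw + of_bool (\<not> col 1 \<and> \<not> col (2 * n))"
    and "card {m \<in> couples n col. \<not> col m} = k"
    using k_black by (cases "col 1"; cases "col (2 * n)"; simp)+
qed

theorem colouring_sign:
  assumes balanced: "balanced_colouring n col"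
  shows "sign_c n col = (-1) ^ colour_exponent n col"
proof (cases "n = 0")
  case True
  then show ?thesis by (simp add: sign_c_zero colour_exponent_def nodes_def numeral_2_eq_2)
next
  case False
  then have n: "1 \<le> n" by simp
  define k where "k = card {m \<in> couples n col. col m}"
  note cards = card_couple_classes[OF balanced n, folded k_def]
  interpret interleaving "couples n col" col k
    using cards(3) by unfold_locales (simp_all add: k_def couples_def nodes_def)
  have "sign_c n col = (-1) ^ inversions (interleave_perm (couples n col) col (col 1)) (2 * k)"
    unfolding sign_c_def couple_perm_eq_interleave_perm
    by (rule sign_eq_inversions[OF interleave_perm_permutes])
  moreover have "even (inversions (interleave_perm (couples n col) col (col 1)) (2 * k)
                       + colour_exponent n col)"
  proof -
    have combine: "even (i + x + kk + y) \<Longrightarrow> even (p + wb + q + f) \<Longrightarrow> even (x + kk + y + c + p + f)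
        \<Longrightarrow> even (i + (c + wb + q))" for i x kk y p wb q f c :: nat
      by presburger
    show ?thesis
      using combine[OF inversions_interleave_perm_parity[of "col 1"] prefix_parity[of "2 * n" col]]
        wrap_around_parity[OF cards(1,2), of "black_white_couple_pairs col (2 * n)" n] n
      unfolding count_black_white_balanced[OF balanced] colour_exponent_def nodes_def
        couple_cross_pairs_eq[OF n]
      by simp
  qed
  ultimately show ?thesis using minus_one_power_eq_of_even_add by metis
qed

theorem mainTheorem5:
  fixes n :: nat and col :: "nat \<Rightarrow> bool" and \<rho> :: "nat set set"
  assumes "balanced_colouring n col"
    and "bw_pairing n col \<rho>"
  shows "sign_c n col * sign_BW n col \<rho> *
           (\<Prod>B\<in>\<rho>. pair_sign col (black_of col B) (white_of col B))
         = (-1) ^ crossings \<rho>"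
proof -
  interpret black_white_pairing n col \<rho> using assms by unfold_locales
  have "sign_c n col * sign_BW n col \<rho> * (\<Prod>B\<in>\<rho>. pair_sign col (black_of col B) (white_of col B))
      = (-1) ^ colour_exponent n col * (-1) ^ (crossings \<rho> + colour_exponent n col)"
    using colouring_sign[OF assms(1)] pairing_sign by (simp add: mult.assoc)
  also have "\<dots> = (-1) ^ crossings \<rho>"
    by (simp add: power_add mult.left_commute left_minus_one_mult_self)
  finally show ?thesis .
qed

end
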